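(* Let $m\geq 4$ be an integer and let $G$ be an $m$-fragile graph. Then: (1) for all non-adjacent $x,y\in V(G)$, $G$ admits an $m$-colouring $c$ with $c(x)=c(y)$; (2) for all distinct $x,y\in V(G)$, $G$ admits an $m$-colouring $c$ with $c(x)\neq c(y)$; (3) for all distinct $x,y,z\in V(G)$, $G$ admits an $m$-colouring $c$ with $c(x)\notin\{c(y),c(z)\}$; (4) for all distinct $x,y,z\in V(G)$ that are not all pairwise adjacent, $G$ admits an $m$-colouring $c$ with $|\{c(x),c(y),c(z)\}|=2$.
   Context: All graphs are finite and simple. A graph is $k$-connected if it has at least $k+1$ vertices and no vertex cutset with at most $k-1$ vertices. For an integer $m\geq 4$, a graph $G$ is $m$-fragile if every $3$-connected subgraph of $G$ is $(m-1)$-colourable. A $k$-colouring of $G$ is a function $c:V(G)\to\{1,\dots,k\}$ with $c(x)\neq c(y)$ for every edge $xy$. *)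

theory Defs
  imports Main
begin

definition graph :: "'a set \<Rightarrow> ('a \<Rightarrow> 'a \<Rightarrow> bool) \<Rightarrow> bool" where
  "graph V E \<longleftrightarrow> finite V \<and> (\<forall>x y. E x y \<longrightarrow> x \<in> V \<and> y \<in> V)
     \<and> (\<forall>x y. E x y \<longrightarrow> E y x) \<and> (\<forall>x. \<not> E x x)"

definition subgraph :: "'a set \<Rightarrow> ('a \<Rightarrow> 'a \<Rightarrow> bool) \<Rightarrow> 'a set \<Rightarrow> ('a \<Rightarrow> 'a \<Rightarrow> bool) \<Rightarrow> bool" where
  "subgraph W F V E \<longleftrightarrow> graph W F \<and> W \<subseteq> V \<and> (\<forall>x y. F x y \<longrightarrow> E x y)"

definition induced :: "('a \<Rightarrow> 'a \<Rightarrow> bool) \<Rightarrow> 'a set \<Rightarrow> 'a \<Rightarrow> 'a \<Rightarrow> bool" where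
  "induced E U = (\<lambda>x y. E x y \<and> x \<in> U \<and> y \<in> U)"

definition connected_graph :: "'a set \<Rightarrow> ('a \<Rightarrow> 'a \<Rightarrow> bool) \<Rightarrow> bool" where
  "connected_graph V E \<longleftrightarrow> V \<noteq> {} \<and> (\<forall>x\<in>V. \<forall>y\<in>V. (induced E V)\<^sup>*\<^sup>* x y)"

definition k_connected :: "nat \<Rightarrow> 'a set \<Rightarrow> ('a \<Rightarrow> 'a \<Rightarrow> bool) \<Rightarrow> bool" where
  "k_connected k V E \<longleftrightarrow> card V \<ge> k + 1 \<and>
     (\<forall>S. S \<subseteq> V \<and> card S \<le> k - 1 \<longrightarrow> connected_graph (V - S) (induced E (V - S)))"

definition colouring :: "nat \<Rightarrow> 'a set \<Rightarrow> ('a \<Rightarrow> 'a \<Rightarrow> bool) \<Rightarrow> ('a \<Rightarrow> nat) \<Rightarrow> bool" where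
  "colouring k V E c \<longleftrightarrow> (\<forall>x\<in>V. c x \<in> {1..k}) \<and> (\<forall>x y. E x y \<longrightarrow> c x \<noteq> c y)"

definition colourable :: "nat \<Rightarrow> 'a set \<Rightarrow> ('a \<Rightarrow> 'a \<Rightarrow> bool) \<Rightarrow> bool" where
  "colourable k V E \<longleftrightarrow> (\<exists>c. colouring k V E c)"

definition fragile :: "nat \<Rightarrow> 'a set \<Rightarrow> ('a \<Rightarrow> 'a \<Rightarrow> bool) \<Rightarrow> bool" where
  "fragile m V E \<longleftrightarrow> (\<forall>W F. subgraph W F V E \<and> k_connected 3 W F \<longrightarrow> colourable (m - 1) W F)"

end

theory Submission
  imports Defs
begin

text \<open>The four properties are proved together, by induction on the number of vertices.
  A 3-connected fragile graph is \<open>(m - 1)\<close>-colourable, and the spare colour class gives all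
  four properties; so do graphs with at most three vertices. Otherwise the graph has a 2-separation
  \<open>V = P \<union> Q\<close>, \<open>P \<inter> Q = {a, b}\<close>, and both sides have the properties by induction.
  Permuting colours on \<open>Q\<close>, a colouring of \<open>P\<close> extends to \<open>V\<close> with colour \<open>k\<close> on a vertex
  \<open>y\<close> of \<open>Q\<close> as soon as some colouring of \<open>Q\<close> relates \<open>y\<close> to \<open>a, b\<close> (same colour or not)
  as \<open>k\<close> relates to the colours of \<open>a, b\<close>. The properties of \<open>Q\<close> force it to realise one of
  four families of such patterns, and a case analysis over these families, using that \<open>G\<close> has
  no \<open>K\<^sub>4\<close> when \<open>m = 4\<close>, gives the properties for vertex sets meeting both sides.\<close>

lemma induced_iff [simp]: "induced E U x y \<longleftrightarrow> E x y \<and> x \<in> U \<and> y \<in> U"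
  unfolding induced_def by simp

lemma induced_idem [simp]: "induced (induced E U) U = induced E U"
  unfolding induced_def by auto

lemma graph_sym: "graph V E \<Longrightarrow> E x y \<Longrightarrow> E y x"
  unfolding graph_def by blast

lemma graph_irrefl: "graph V E \<Longrightarrow> \<not> E x x"
  unfolding graph_def by blast

lemma graph_edge_in: "graph V E \<Longrightarrow> E x y \<Longrightarrow> x \<in> V \<and> y \<in> V"
  unfolding graph_def by blast

lemma graph_finite: "graph V E \<Longrightarrow> finite V"
  unfolding graph_def by blast

lemma graph_induced: "graph V E \<Longrightarrow> W \<subseteq> V \<Longrightarrow> graph W (induced E W)"
  unfolding graph_def by (auto intro: finite_subset)

lemma fragile_induced: "fragile m V E \<Longrightarrow> W \<subseteq> V \<Longrightarrow> fragile m W (induced E W)"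
  unfolding fragile_def subgraph_def by auto

lemma colouring_range: "colouring m V E c \<Longrightarrow> x \<in> V \<Longrightarrow> c x \<in> {1..m}"
  unfolding colouring_def by blast

lemma colouring_edge: "colouring m V E c \<Longrightarrow> E x y \<Longrightarrow> c x \<noteq> c y"
  unfolding colouring_def by blast

lemma card_insert3_eq_2_iff:
  "card {p, q, r} = 2 \<longleftrightarrow> (p = q \<and> q \<noteq> r) \<or> (p = r \<and> q \<noteq> r) \<or> (q = r \<and> p \<noteq> q)"
  by (auto simp: card_insert_if)

lemma unused_colour:
  assumes "finite X" "card X < (m::nat)"
  obtains k where "k \<in> {1..m}" "k \<notin> X"
proof -
  have "\<not> {1..m} \<subseteq> X"
    using card_mono[OF assms(1), of "{1..m}"] assms(2) by auto
  then show ?thesis using that by blast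
qed

lemma unused_colour3:
  assumes "4 \<le> (m::nat)"
  obtains k where "k \<in> {1..m}" "k \<notin> {p, q, r}"
proof -
  have "card {p, q, r} \<le> 3" by (auto simp: card_insert_if)
  then have "card {p, q, r} < m" using assms by linarith
  then show ?thesis by (rule unused_colour[rotated]) (use that in simp_all)
qed

lemma unused_colour4:
  assumes "4 \<le> (m::nat)" and "5 \<le> m \<or> \<not> distinct [p, q, r, s]"
  obtains k where "k \<in> {1..m}" "k \<notin> {p, q, r, s}"
proof -
  have "card {p, q, r, s} < m"
  proof (cases "5 \<le> m")
    case True
    then show ?thesis using card_length[of "[p, q, r, s]"] by simp
  next
    case False
    then have "card (set [p, q, r, s]) < length [p, q, r, s]"
      using assms(2) card_distinct card_length le_neq_implies_less by blast
    then show ?thesis using assms(1) by simp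
  qed
  then show ?thesis by (rule unused_colour[rotated]) (use that in simp_all)
qed

lemma inj_on_extends_to_bij_betw:
  assumes "finite U" "D \<subseteq> U" "inj_on f D" "f ` D \<subseteq> U"
  obtains \<pi> where "bij_betw \<pi> U U" "\<And>x. x \<in> D \<Longrightarrow> \<pi> x = f x"
proof -
  have "finite D" using assms finite_subset by blast
  moreover have "card (f ` D) = card D" using assms(3) card_image by blast
  ultimately have "card (U - D) = card (U - f ` D)"
    using assms by (simp add: card_Diff_subset finite_subset)
  then obtain g where g: "bij_betw g (U - D) (U - f ` D)"
    using assms(1) by (meson finite_Diff finite_same_card_bij)
  define \<pi> where "\<pi> = (\<lambda>x. if x \<in> D then f x else g x)"
  have "bij_betw \<pi> D (f ` D)"
    unfolding \<pi>_def using assms(3) by (simp add: bij_betw_def inj_on_def)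
  moreover have "bij_betw \<pi> (U - D) (U - f ` D)"
    unfolding \<pi>_def using g by (rule bij_betw_cong[THEN iffD1, rotated]) auto
  ultimately have "bij_betw \<pi> (D \<union> (U - D)) (f ` D \<union> (U - f ` D))"
    by (rule bij_betw_combine) blast
  moreover have "D \<union> (U - D) = U" "f ` D \<union> (U - f ` D) = U" using assms by auto
  ultimately show ?thesis
    by (intro that[of \<pi>]) (auto simp: \<pi>_def)
qed

section \<open>Flexibility and the base cases\<close>

definition flexible_on :: "nat \<Rightarrow> 'a set \<Rightarrow> ('a \<Rightarrow> 'a \<Rightarrow> bool) \<Rightarrow> 'a set \<Rightarrow> bool" where
  "flexible_on m V E U \<longleftrightarrow>
     (\<forall>x\<in>U. \<forall>y\<in>U. x \<noteq> y \<and> \<not> E x y \<longrightarrow> (\<exists>c. colouring m V E c \<and> c x = c y))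
   \<and> (\<forall>x\<in>U. \<forall>y\<in>U. x \<noteq> y \<longrightarrow> (\<exists>c. colouring m V E c \<and> c x \<noteq> c y))
   \<and> (\<forall>x\<in>U. \<forall>y\<in>U. \<forall>z\<in>U. x \<noteq> y \<and> x \<noteq> z \<and> y \<noteq> z \<longrightarrow>
        (\<exists>c. colouring m V E c \<and> c x \<notin> {c y, c z}))
   \<and> (\<forall>x\<in>U. \<forall>y\<in>U. \<forall>z\<in>U. x \<noteq> y \<and> x \<noteq> z \<and> y \<noteq> z \<and> \<not> (E x y \<and> E x z \<and> E y z) \<longrightarrow>
        (\<exists>c. colouring m V E c \<and> card {c x, c y, c z} = 2))"

abbreviation flexible :: "nat \<Rightarrow> 'a set \<Rightarrow> ('a \<Rightarrow> 'a \<Rightarrow> bool) \<Rightarrow> bool" where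
  "flexible m V E \<equiv> flexible_on m V E V"

lemma flexible_onI:
  assumes "\<And>x y. x \<in> U \<Longrightarrow> y \<in> U \<Longrightarrow> x \<noteq> y \<Longrightarrow> \<not> E x y \<Longrightarrow> \<exists>c. colouring m V E c \<and> c x = c y"
    and "\<And>x y. x \<in> U \<Longrightarrow> y \<in> U \<Longrightarrow> x \<noteq> y \<Longrightarrow> \<exists>c. colouring m V E c \<and> c x \<noteq> c y"
    and "\<And>x y z. x \<in> U \<Longrightarrow> y \<in> U \<Longrightarrow> z \<in> U \<Longrightarrow> x \<noteq> y \<Longrightarrow> x \<noteq> z \<Longrightarrow> y \<noteq> z \<Longrightarrow>
           \<exists>c. colouring m V E c \<and> c x \<notin> {c y, c z}"
    and "\<And>x y z. x \<in> U \<Longrightarrow> y \<in> U \<Longrightarrow> z \<in> U \<Longrightarrow> x \<noteq> y \<Longrightarrow> x \<noteq> z \<Longrightarrow> y \<noteq> z \<Longrightarrow>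
           \<not> (E x y \<and> E x z \<and> E y z) \<Longrightarrow> \<exists>c. colouring m V E c \<and> card {c x, c y, c z} = 2"
  shows "flexible_on m V E U"
  unfolding flexible_on_def by (intro conjI ballI impI; (elim conjE)?; rule assms; assumption)

lemma flexible_on_same:
  "flexible_on m V E U \<Longrightarrow> x \<in> U \<Longrightarrow> y \<in> U \<Longrightarrow> x \<noteq> y \<Longrightarrow> \<not> E x y \<Longrightarrow>
    \<exists>c. colouring m V E c \<and> c x = c y"
  unfolding flexible_on_def by blast

lemma flexible_on_distinct:
  "flexible_on m V E U \<Longrightarrow> x \<in> U \<Longrightarrow> y \<in> U \<Longrightarrow> x \<noteq> y \<Longrightarrow>
    \<exists>c. colouring m V E c \<and> c x \<noteq> c y"
  unfolding flexible_on_def by blast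

lemma flexible_on_avoid:
  "flexible_on m V E U \<Longrightarrow> x \<in> U \<Longrightarrow> y \<in> U \<Longrightarrow> z \<in> U \<Longrightarrow> x \<noteq> y \<Longrightarrow> x \<noteq> z \<Longrightarrow> y \<noteq> z \<Longrightarrow>
    \<exists>c. colouring m V E c \<and> c x \<notin> {c y, c z}"
  unfolding flexible_on_def by blast

lemma flexible_on_two_colours:
  "flexible_on m V E U \<Longrightarrow> x \<in> U \<Longrightarrow> y \<in> U \<Longrightarrow> z \<in> U \<Longrightarrow> x \<noteq> y \<Longrightarrow> x \<noteq> z \<Longrightarrow> y \<noteq> z \<Longrightarrow>
    \<not> (E x y \<and> E x z \<and> E y z) \<Longrightarrow> \<exists>c. colouring m V E c \<and> card {c x, c y, c z} = 2"
  unfolding flexible_on_def by blast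

lemma two_colours_from_merged_pair:
  assumes xyz: "x \<in> V" "y \<in> V" "z \<in> V" "x \<noteq> y" "x \<noteq> z" "y \<noteq> z"
    and "\<not> (E x y \<and> E x z \<and> E y z)"
    and merge: "\<And>p q r. p \<in> V \<Longrightarrow> q \<in> V \<Longrightarrow> r \<in> V \<Longrightarrow> p \<noteq> q \<Longrightarrow> p \<noteq> r \<Longrightarrow> q \<noteq> r \<Longrightarrow>
      \<not> E p q \<Longrightarrow> \<exists>c. colouring m V E c \<and> card {c p, c q, c r} = 2"
  shows "\<exists>c. colouring m V E c \<and> card {c x, c y, c z} = 2"
proof -
  consider "\<not> E x y" | "\<not> E x z" | "\<not> E y z" using assms(7) by blast
  then show ?thesis
  proof cases
    case 1
    then show ?thesis using merge[of x y z] xyz by simp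
  next
    case 2
    then show ?thesis using merge[of x z y] xyz by (simp add: insert_commute)
  next
    case 3
    then show ?thesis using merge[of y z x] xyz by (simp add: insert_commute)
  qed
qed

lemma colouring_add_colour_class:
  assumes c: "colouring (m - 1) V E c" and "1 \<le> m" and "graph V E"
    and indep: "\<And>u w. u \<in> I \<Longrightarrow> w \<in> I \<Longrightarrow> \<not> E u w"
  shows "colouring m V E (\<lambda>v. if v \<in> I then m else c v)"
  unfolding colouring_def
proof (intro conjI allI impI ballI)
  fix v assume "v \<in> V"
  then show "(if v \<in> I then m else c v) \<in> {1..m}"
    using colouring_range[OF c] \<open>1 \<le> m\<close> by force
next
  fix u w assume e: "E u w"
  then have "u \<in> V" "w \<in> V" using \<open>graph V E\<close> graph_edge_in by metis+
  then have "c u < m" "c w < m" using colouring_range[OF c] \<open>1 \<le> m\<close> by force+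
  then show "(if u \<in> I then m else c u) \<noteq> (if w \<in> I then m else c w)"
    using indep[of u w] colouring_edge[OF c e] e by auto
qed

lemma flexible_if_colourable:
  assumes m: "2 \<le> m" and g: "graph V E" and "colourable (m - 1) V E"
  shows "flexible m V E"
proof -
  obtain c0 where c0: "colouring (m - 1) V E c0"
    using \<open>colourable (m - 1) V E\<close> unfolding colourable_def by blast
  have below: "c0 v < m" if "v \<in> V" for v
    using colouring_range[OF c0 that] m by auto
  have recolour: "colouring m V E (\<lambda>v. if v \<in> I then m else c0 v)"
    if "\<And>u w. u \<in> I \<Longrightarrow> w \<in> I \<Longrightarrow> \<not> E u w" for I
    using colouring_add_colour_class[OF c0 _ g that] m by simp
  have single: "colouring m V E (\<lambda>v. if v \<in> {x} then m else c0 v)" for x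
    by (rule recolour) (simp add: graph_irrefl[OF g])
  have pair: "colouring m V E (\<lambda>v. if v \<in> {x, y} then m else c0 v)" if "\<not> E x y" for x y
    by (rule recolour) (use that graph_irrefl[OF g] graph_sym[OF g] in blast)
  show ?thesis
  proof (rule flexible_onI)
    fix x y assume "\<not> E x y"
    then show "\<exists>c. colouring m V E c \<and> c x = c y"
      by (intro exI[of _ "\<lambda>v. if v \<in> {x, y} then m else c0 v"] conjI pair) simp_all
  next
    fix x y assume "y \<in> V" "x \<noteq> y"
    then show "\<exists>c. colouring m V E c \<and> c x \<noteq> c y"
      using below[of y] by (intro exI[of _ "\<lambda>v. if v \<in> {x} then m else c0 v"] conjI single) simp
  next
    fix x y z assume "y \<in> V" "z \<in> V" "x \<noteq> y" "x \<noteq> z"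
    then show "\<exists>c. colouring m V E c \<and> c x \<notin> {c y, c z}"
      using below[of y] below[of z]
      by (intro exI[of _ "\<lambda>v. if v \<in> {x} then m else c0 v"] conjI single) simp
  next
    fix x y z assume "x \<in> V" "y \<in> V" "z \<in> V" "x \<noteq> y" "x \<noteq> z" "y \<noteq> z"
      and "\<not> (E x y \<and> E x z \<and> E y z)"
    then show "\<exists>c. colouring m V E c \<and> card {c x, c y, c z} = 2"
    proof (rule two_colours_from_merged_pair)
      fix p q r assume "r \<in> V" "p \<noteq> r" "q \<noteq> r" "\<not> E p q"
      then show "\<exists>c. colouring m V E c \<and> card {c p, c q, c r} = 2"
        using below[of r] by (intro exI[of _ "\<lambda>v. if v \<in> {p, q} then m else c0 v"] conjI pair)
          (simp_all add: card_insert_if)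
    qed
  qed
qed

lemma card_le_3_remainder_unique:
  assumes "finite V" "card V \<le> 3" "x \<in> V" "y \<in> V" "x \<noteq> y" "u \<in> V - {x, y}" "w \<in> V - {x, y}"
  shows "u = w"
proof (rule ccontr)
  assume "u \<noteq> w"
  then have "card {x, y, u, w} = 4" using assms by auto
  moreover have "card {x, y, u, w} \<le> card V" using assms by (intro card_mono) auto
  ultimately show False using assms(2) by linarith
qed

lemma flexible_if_card_le_3:
  assumes m: "3 \<le> m" and g: "graph V E" and small: "card V \<le> 3"
  shows "flexible m V E"
proof -
  note others = card_le_3_remainder_unique[OF graph_finite[OF g] small]
  have edge: "u \<in> V" "w \<in> V" "u \<noteq> w" if "E u w" for u w
    using that graph_edge_in[OF g] graph_irrefl[OF g] by metis+
  have merge: "colouring m V E (\<lambda>v. if v \<in> {p, q} then 1 else 2)"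
    if "p \<in> V" "q \<in> V" "p \<noteq> q" "\<not> E p q" for p q
    unfolding colouring_def
  proof (intro conjI allI impI ballI)
    fix v show "(if v \<in> {p, q} then 1 else 2) \<in> {1..m}" using m by auto
  next
    fix u w assume e: "E u w"
    have "\<not> E q p" using that graph_sym[OF g] by blast
    then show "(if u \<in> {p, q} then 1::nat else 2) \<noteq> (if w \<in> {p, q} then 1 else 2)"
      using e edge[OF e] others[OF that(1-3), of u w] that by auto
  qed
  have three: "colouring m V E (\<lambda>v. if v = p then 1 else if v = q then 2 else 3)"
    if "p \<in> V" "q \<in> V" "p \<noteq> q" for p q
    unfolding colouring_def
  proof (intro conjI allI impI ballI)
    fix v show "(if v = p then 1 else if v = q then 2 else 3) \<in> {1..m}" using m by auto
  next
    fix u w assume e: "E u w"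
    show "(if u = p then 1::nat else if u = q then 2 else 3) \<noteq> (if w = p then 1 else if w = q then 2 else 3)"
      using edge[OF e] others[OF that, of u w] by auto
  qed
  show ?thesis
  proof (rule flexible_onI)
    fix x y assume "x \<in> V" "y \<in> V" "x \<noteq> y" "\<not> E x y"
    then show "\<exists>c. colouring m V E c \<and> c x = c y"
      using merge by (intro exI[of _ "\<lambda>v. if v \<in> {x, y} then 1 else 2"]) simp
  next
    fix x y assume "x \<in> V" "y \<in> V" "x \<noteq> y"
    then show "\<exists>c. colouring m V E c \<and> c x \<noteq> c y"
      using three by (intro exI[of _ "\<lambda>v. if v = x then 1 else if v = y then 2 else 3"]) simp
  next
    fix x y z assume "x \<in> V" "y \<in> V" "x \<noteq> y" "x \<noteq> z"
    then show "\<exists>c. colouring m V E c \<and> c x \<notin> {c y, c z}"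
      using three by (intro exI[of _ "\<lambda>v. if v = x then 1 else if v = y then 2 else 3"]) simp
  next
    fix x y z assume "x \<in> V" "y \<in> V" "z \<in> V" "x \<noteq> y" "x \<noteq> z" "y \<noteq> z"
      and "\<not> (E x y \<and> E x z \<and> E y z)"
    then show "\<exists>c. colouring m V E c \<and> card {c x, c y, c z} = 2"
    proof (rule two_colours_from_merged_pair)
      fix p q r assume "p \<in> V" "q \<in> V" "p \<noteq> q" "p \<noteq> r" "q \<noteq> r" "\<not> E p q"
      then show "\<exists>c. colouring m V E c \<and> card {c p, c q, c r} = 2"
        using merge[of p q] by (intro exI[of _ "\<lambda>v. if v \<in> {p, q} then 1 else 2"])
          (simp add: card_insert_if)
    qed
  qed
qed

lemma fragile_4_no_K4:
  assumes g: "graph V E" and f: "fragile 4 V E" and W: "W \<subseteq> V" "card W = 4"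
  shows "\<exists>u\<in>W. \<exists>w\<in>W. u \<noteq> w \<and> \<not> E u w"
proof (rule ccontr)
  assume "\<not> ?thesis"
  then have clique: "induced E W u w" if "u \<in> W" "w \<in> W" "u \<noteq> w" for u w
    using that by auto
  have "k_connected 3 W (induced E W)"
    unfolding k_connected_def
  proof (intro conjI allI impI)
    show "3 + 1 \<le> card W" using W by simp
  next
    fix S assume S: "S \<subseteq> W \<and> card S \<le> 3 - 1"
    have "finite W" using W by (simp add: card_ge_0_finite)
    then have "card (W - S) \<ge> 2" using S W card_Diff_subset[of S W] finite_subset[of S W] by auto
    then have "W - S \<noteq> {}" by (metis card.empty not_numeral_le_zero)
    moreover have "(induced (induced (induced E W) (W - S)) (W - S))\<^sup>*\<^sup>* u w"
      if "u \<in> W - S" "w \<in> W - S" for u w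
      using that clique[of u w] by (cases "u = w") auto
    ultimately show "connected_graph (W - S) (induced (induced E W) (W - S))"
      unfolding connected_graph_def by blast
  qed
  moreover have "subgraph W (induced E W) V E"
    unfolding subgraph_def using graph_induced[OF g W(1)] W(1) by simp
  ultimately obtain c where c: "colouring 3 W (induced E W) c"
    using f unfolding fragile_def colourable_def by force
  have "inj_on c W"
    by (rule inj_onI) (use clique colouring_edge[OF c] in blast)
  moreover have "c ` W \<subseteq> {1..3}" using colouring_range[OF c] by blast
  ultimately have "card W \<le> card {1..3::nat}" by (rule card_inj_on_le) simp
  then show False using W by simp
qed

section \<open>Separations\<close>

definition separation :: "'a set \<Rightarrow> ('a \<Rightarrow> 'a \<Rightarrow> bool) \<Rightarrow> 'a set \<Rightarrow> 'a set \<Rightarrow> 'a set \<Rightarrow> bool" where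
  "separation V E S A B \<longleftrightarrow> V = A \<union> B \<union> S \<and> A \<inter> B = {} \<and> A \<inter> S = {} \<and> B \<inter> S = {}
     \<and> A \<noteq> {} \<and> B \<noteq> {} \<and> (\<forall>x\<in>A. \<forall>y\<in>B. \<not> E x y \<and> \<not> E y x)"

lemma separation_sym: "separation V E S A B \<Longrightarrow> separation V E S B A"
  unfolding separation_def by blast

lemma separation_card:
  assumes "finite V" "separation V E S A B"
  shows "card V = card A + card B + card S"
proof -
  have "V = (A \<union> B) \<union> S" "A \<inter> B = {}" "(A \<union> B) \<inter> S = {}"
    using assms(2) unfolding separation_def by auto
  moreover have "finite A" "finite B" "finite S" using assms unfolding separation_def by auto
  ultimately show ?thesis by (simp add: card_Un_disjoint)
qed

lemma separation_enlarge_separator: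
  assumes "finite V" "separation V E S A B" "2 \<le> card A"
  shows "\<exists>S' A' B'. separation V E S' A' B' \<and> card S' = Suc (card S)"
proof -
  obtain w where w: "w \<in> A" using assms(2) unfolding separation_def by blast
  have "finite A" "finite S" using assms(1,2) unfolding separation_def by auto
  then have "1 \<le> card (A - {w})" using w assms(3) by simp
  then have "A - {w} \<noteq> {}" by (metis card.empty not_one_le_zero)
  have "w \<notin> S" using w assms(2) unfolding separation_def by blast
  then have "card (insert w S) = Suc (card S)" using \<open>finite S\<close> by simp
  moreover have "separation V E (insert w S) (A - {w}) B"
    using assms(2) w \<open>A - {w} \<noteq> {}\<close> unfolding separation_def by blast
  ultimately show ?thesis by blast
qed

lemma separation_with_separator_2:
  assumes fin: "finite V" and V: "4 \<le> card V" and "separation V E S A B" "card S \<le> 2"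
  shows "\<exists>S A B. separation V E S A B \<and> card S = 2"
  using assms(3,4)
proof (induction "2 - card S" arbitrary: S A B)
  case 0
  then show ?case by auto
next
  case (Suc n)
  have "2 \<le> card A \<or> 2 \<le> card B"
    using separation_card[OF fin Suc.prems(1)] Suc.hyps(2) V by linarith
  then obtain S' A' B' where "separation V E S' A' B'" "card S' = Suc (card S)"
    using separation_enlarge_separator[OF fin] separation_sym Suc.prems(1) by blast
  moreover have "n = 2 - card S'" "card S' \<le> 2" using Suc.hyps(2) \<open>card S' = Suc (card S)\<close> by auto
  ultimately show ?case using Suc.hyps(1) by blast
qed

lemma separation_if_disconnected:
  assumes g: "graph V E" and "S \<subseteq> V" "V - S \<noteq> {}"
    and "\<not> connected_graph (V - S) (induced E (V - S))"
  shows "\<exists>A B. separation V E S A B"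
proof -
  define R where "R = induced E (V - S)"
  obtain x y where xy: "x \<in> V - S" "y \<in> V - S" "\<not> R\<^sup>*\<^sup>* x y"
    using assms(3,4) unfolding connected_graph_def R_def by auto
  define B where "B = {w \<in> V - S. R\<^sup>*\<^sup>* x w}"
  have closed: "w \<in> B" if "v \<in> B" "w \<in> V - S" "E v w \<or> E w v" for v w
  proof -
    have "R v w" using that graph_sym[OF g] unfolding R_def B_def by auto
    then show ?thesis using that unfolding B_def by (auto intro: rtranclp.rtrancl_into_rtrancl)
  qed
  have "separation V E S (V - S - B) B"
    unfolding separation_def using assms(2) xy closed unfolding B_def by blast
  then show ?thesis by blast
qed

lemma two_separation_exists:
  assumes g: "graph V E" and V: "4 \<le> card V" and "\<not> k_connected 3 V E"
  shows "\<exists>S A B. separation V E S A B \<and> card S = 2"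
proof -
  obtain S where S: "S \<subseteq> V" "card S \<le> 2" and disconnected: "\<not> connected_graph (V - S) (induced E (V - S))"
    using assms(3) V unfolding k_connected_def by auto
  have "2 \<le> card (V - S)"
    using S V graph_finite[OF g] card_Diff_subset[of S V] finite_subset[of S V] by auto
  then have "V - S \<noteq> {}" by (metis card.empty not_numeral_le_zero)
  then obtain A B where "separation V E S A B"
    using separation_if_disconnected[OF g S(1) _ disconnected] by blast
  then show ?thesis using separation_with_separator_2[OF graph_finite[OF g] V _ S(2)] by blast
qed

section \<open>Colour patterns on a triple\<close>

text \<open>The triple records which of the colours of \<open>y\<close>, \<open>p\<close>, \<open>q\<close> coincide; only the five
  triples named below are consistent.\<close>
definition realises :: "nat \<Rightarrow> 'a set \<Rightarrow> ('a \<Rightarrow> 'a \<Rightarrow> bool) \<Rightarrow> 'a \<Rightarrow> 'a \<Rightarrow> 'a \<Rightarrow> bool \<times> bool \<times> bool \<Rightarrow> bool" where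
  "realises m W F y p q t \<longleftrightarrow> (\<exists>c. colouring m W F c \<and> (c y = c p, c y = c q, c p = c q) = t)"

abbreviation rainbow :: "bool \<times> bool \<times> bool" where "rainbow \<equiv> (False, False, False)"
abbreviation monochrome :: "bool \<times> bool \<times> bool" where "monochrome \<equiv> (True, True, True)"
abbreviation apart :: "bool \<times> bool \<times> bool" where "apart \<equiv> (False, False, True)"
abbreviation join_fst :: "bool \<times> bool \<times> bool" where "join_fst \<equiv> (True, False, False)"
abbreviation join_snd :: "bool \<times> bool \<times> bool" where "join_snd \<equiv> (False, True, False)"

lemma realisesI: "colouring m W F c \<Longrightarrow> realises m W F y p q (c y = c p, c y = c q, c p = c q)"
  unfolding realises_def by blast

lemma flexible_realises_patterns:
  assumes flex: "flexible m W F" and in_W: "y \<in> W" "p \<in> W" "q \<in> W"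
    and distinct: "y \<noteq> p" "y \<noteq> q" "p \<noteq> q" and "\<not> F p q"
  shows "realises m W F y p q apart \<and> realises m W F y p q rainbow
    \<or> realises m W F y p q apart \<and> realises m W F y p q join_fst \<and> realises m W F y p q join_snd
    \<or> realises m W F y p q rainbow \<and> realises m W F y p q monochrome \<and> realises m W F y p q join_fst
    \<or> realises m W F y p q rainbow \<and> realises m W F y p q monochrome \<and> realises m W F y p q join_snd"
proof -
  obtain c1 where c1: "colouring m W F c1" "c1 y \<notin> {c1 p, c1 q}"
    using flexible_on_avoid[OF flex in_W distinct] by blast
  have avoid_y: "realises m W F y p q rainbow \<or> realises m W F y p q apart"
    using c1(2) realisesI[OF c1(1), of y p q] by (cases "c1 p = c1 q") simp_all
  obtain c2 where c2: "colouring m W F c2" "card {c2 y, c2 p, c2 q} = 2"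
    using flexible_on_two_colours[OF flex in_W distinct] \<open>\<not> F p q\<close> by blast
  have two_colours: "realises m W F y p q apart \<or> realises m W F y p q join_fst \<or> realises m W F y p q join_snd"
    using c2(2) realisesI[OF c2(1), of y p q] unfolding card_insert3_eq_2_iff by auto
  obtain c3 where c3: "colouring m W F c3" "c3 p = c3 q"
    using flexible_on_same[OF flex in_W(2,3) distinct(3) \<open>\<not> F p q\<close>] by blast
  have same_pq: "realises m W F y p q apart \<or> realises m W F y p q monochrome"
    using c3(2) realisesI[OF c3(1), of y p q] by (cases "c3 y = c3 p") simp_all
  obtain c4 where c4: "colouring m W F c4" "c4 p \<notin> {c4 y, c4 q}"
    using flexible_on_avoid[OF flex in_W(2,1,3)] distinct by auto
  have avoid_p: "realises m W F y p q rainbow \<or> realises m W F y p q join_snd"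
    using c4(2) realisesI[OF c4(1), of y p q] by (cases "c4 y = c4 q") auto
  obtain c5 where c5: "colouring m W F c5" "c5 q \<notin> {c5 y, c5 p}"
    using flexible_on_avoid[OF flex in_W(3,1,2)] distinct by auto
  have avoid_q: "realises m W F y p q rainbow \<or> realises m W F y p q join_fst"
    using c5(2) realisesI[OF c5(1), of y p q] by (cases "c5 y = c5 p") auto
  show ?thesis using avoid_y two_colours same_pq avoid_p avoid_q by blast
qed

lemma flexible_realises_rainbow_if_edge:
  assumes flex: "flexible m W F" and in_W: "y \<in> W" "p \<in> W" "q \<in> W"
    and distinct: "y \<noteq> p" "y \<noteq> q" "p \<noteq> q" and "F p q"
  shows "realises m W F y p q rainbow"
proof -
  obtain c where c: "colouring m W F c" "c y \<notin> {c p, c q}"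
    using flexible_on_avoid[OF flex in_W distinct] by blast
  then have "c p \<noteq> c q" using colouring_edge[OF c(1) \<open>F p q\<close>] by blast
  then show ?thesis using c(2) realisesI[OF c(1), of y p q] by simp
qed

lemma flexible_realises_distinct:
  assumes "flexible m W F" "y \<in> W" "p \<in> W" "q \<in> W" "y \<noteq> p" "y \<noteq> q" "p \<noteq> q"
  shows "realises m W F y p q rainbow \<or> realises m W F y p q join_fst \<and> realises m W F y p q join_snd"
  using flexible_realises_rainbow_if_edge[OF assms] flexible_realises_patterns[OF assms] by blast

lemma flexible_realises_equal:
  assumes "flexible m W F" "y \<in> W" "p \<in> W" "q \<in> W" "y \<noteq> p" "y \<noteq> q" "p \<noteq> q" "\<not> F p q"
  shows "realises m W F y p q apart \<or> realises m W F y p q monochrome"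
  using flexible_realises_patterns[OF assms] by blast

section \<open>Gluing along a 2-separation\<close>

locale two_separation =
  fixes m :: nat and V :: "'a set" and E :: "'a \<Rightarrow> 'a \<Rightarrow> bool" and P Q :: "'a set" and a b :: 'a
  assumes m: "4 \<le> m" and graph: "graph V E" and fragile: "fragile m V E"
    and sides: "V = P \<union> Q" and cut: "P \<inter> Q = {a, b}" and cut_distinct: "a \<noteq> b"
    and no_cross_edge: "\<And>x y. x \<in> P - {a, b} \<Longrightarrow> y \<in> Q - {a, b} \<Longrightarrow> \<not> E x y"
    and flexible_P: "flexible m P (induced E P)" and flexible_Q: "flexible m Q (induced E Q)"
begin

lemma swap_sides: "two_separation m V E Q P a b"
proof
  show "\<not> E x y" if "x \<in> Q - {a, b}" "y \<in> P - {a, b}" for x y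
    using that no_cross_edge graph_sym[OF graph] by blast
qed (use m graph fragile sides cut cut_distinct flexible_P flexible_Q in auto)

lemma cut_in_sides: "a \<in> P" "b \<in> P" "a \<in> Q" "b \<in> Q"
  using cut by auto

lemma outside_P: "v \<in> V \<Longrightarrow> v \<notin> P \<Longrightarrow> v \<in> Q - {a, b}"
  using sides cut by auto

lemma edge_within_side: "E x y \<Longrightarrow> x \<in> P \<and> y \<in> P \<or> x \<in> Q \<and> y \<in> Q"
  using graph_edge_in[OF graph] no_cross_edge graph_sym[OF graph] sides cut by blast

lemma extend_colouring_perm:
  assumes c1: "colouring m P (induced E P) c1" and c2: "colouring m Q (induced E Q) c2"
    and D: "D \<subseteq> {1..m}" "c2 a \<in> D" "c2 b \<in> D" and f: "inj_on f D" "f ` D \<subseteq> {1..m}"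
    and fa: "f (c2 a) = c1 a" and fb: "f (c2 b) = c1 b"
  obtains c where "colouring m V E c" "\<forall>v\<in>P. c v = c1 v" "\<forall>v\<in>Q. c2 v \<in> D \<longrightarrow> c v = f (c2 v)"
proof -
  obtain \<pi> where \<pi>: "bij_betw \<pi> {1..m} {1..m}" "\<And>x. x \<in> D \<Longrightarrow> \<pi> x = f x"
    using inj_on_extends_to_bij_betw[of "{1..m}" D f] D f by auto
  define c where "c = (\<lambda>v. if v \<in> P then c1 v else \<pi> (c2 v))"
  have on_Q: "c v = \<pi> (c2 v)" if "v \<in> Q" for v
  proof (cases "v \<in> P")
    case True
    then have "v = a \<or> v = b" using that cut by blast
    then show ?thesis using True \<pi>(2) D fa fb unfolding c_def by auto
  qed (simp add: c_def)
  have "colouring m V E c"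
    unfolding colouring_def
  proof (intro conjI ballI allI impI)
    fix v assume "v \<in> V"
    then show "c v \<in> {1..m}"
      using colouring_range[OF c1] colouring_range[OF c2] on_Q bij_betwE[OF \<pi>(1)] sides
      unfolding c_def by (cases "v \<in> P") auto
  next
    fix x y assume e: "E x y"
    show "c x \<noteq> c y"
    proof (cases "x \<in> P \<and> y \<in> P")
      case True
      then show ?thesis using colouring_edge[OF c1, of x y] e unfolding c_def by simp
    next
      case False
      then have Q: "x \<in> Q" "y \<in> Q" using edge_within_side[OF e] by auto
      then have "c2 x \<noteq> c2 y" "c2 x \<in> {1..m}" "c2 y \<in> {1..m}"
        using colouring_edge[OF c2, of x y] colouring_range[OF c2] e by auto
      then show ?thesis
        using on_Q[OF Q(1)] on_Q[OF Q(2)] bij_betw_imp_inj_on[OF \<pi>(1)] by (metis inj_onD)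
    qed
  qed
  moreover have "\<forall>v\<in>P. c v = c1 v" unfolding c_def by simp
  moreover have "\<forall>v\<in>Q. c2 v \<in> D \<longrightarrow> c v = f (c2 v)" using on_Q \<pi>(2) by auto
  ultimately show ?thesis by (rule that)
qed

lemma extend_colouring:
  assumes c1: "colouring m P (induced E P) c1"
  obtains c where "colouring m V E c" "\<forall>v\<in>P. c v = c1 v"
proof -
  obtain c2 where c2: "colouring m Q (induced E Q) c2" and same: "c2 a = c2 b \<longleftrightarrow> c1 a = c1 b"
  proof (cases "c1 a = c1 b")
    case True
    then have "\<not> E a b" using colouring_edge[OF c1, of a b] cut_in_sides by auto
    then show ?thesis
      using flexible_on_same[OF flexible_Q cut_in_sides(3,4) cut_distinct] that True by auto
  next
    case False
    then show ?thesis
      using flexible_on_distinct[OF flexible_Q cut_in_sides(3,4) cut_distinct] that by blast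
  qed
  define f where "f = (\<lambda>z. if z = c2 a then c1 a else c1 b)"
  show ?thesis
  proof (rule extend_colouring_perm[OF c1 c2, of "{c2 a, c2 b}" f])
    show "{c2 a, c2 b} \<subseteq> {1..m}" using colouring_range[OF c2] cut_in_sides by auto
    show "f ` {c2 a, c2 b} \<subseteq> {1..m}" using colouring_range[OF c1] cut_in_sides by (auto simp: f_def)
    show "inj_on f {c2 a, c2 b}" "f (c2 a) = c1 a" "f (c2 b) = c1 b"
      using same by (auto simp: f_def inj_on_def)
  qed (use that in auto)
qed

lemma extend_colouring_at:
  assumes c1: "colouring m P (induced E P) c1" and y: "y \<in> Q" and k: "k \<in> {1..m}"
    and r: "realises m Q (induced E Q) y a b (k = c1 a, k = c1 b, c1 a = c1 b)"
  obtains c where "colouring m V E c" "\<forall>v\<in>P. c v = c1 v" "c y = k"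
proof -
  obtain c2 where c2: "colouring m Q (induced E Q) c2"
    and pat: "c2 y = c2 a \<longleftrightarrow> k = c1 a" "c2 y = c2 b \<longleftrightarrow> k = c1 b" "c2 a = c2 b \<longleftrightarrow> c1 a = c1 b"
    using r unfolding realises_def prod.inject by blast
  define f where "f = (\<lambda>z. if z = c2 a then c1 a else if z = c2 b then c1 b else k)"
  have fa: "f (c2 a) = c1 a" and fb: "f (c2 b) = c1 b" and fy: "f (c2 y) = k"
    unfolding f_def using pat by metis+
  have inj: "inj_on f {c2 a, c2 b, c2 y}"
  proof (rule inj_onI)
    fix u w assume "u \<in> {c2 a, c2 b, c2 y}" "w \<in> {c2 a, c2 b, c2 y}" "f u = f w"
    then show "u = w" using pat fa fb fy by (elim insertE emptyE) metis+
  qed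
  have D: "{c2 a, c2 b, c2 y} \<subseteq> {1..m}" using colouring_range[OF c2] cut_in_sides y by auto
  have img: "f ` {c2 a, c2 b, c2 y} \<subseteq> {1..m}"
    using colouring_range[OF c1] cut_in_sides k fa fb fy by auto
  obtain c where "colouring m V E c" "\<forall>v\<in>P. c v = c1 v"
    and "\<forall>v\<in>Q. c2 v \<in> {c2 a, c2 b, c2 y} \<longrightarrow> c v = f (c2 v)"
    by (rule extend_colouring_perm[OF c1 c2 D _ _ inj img fa fb]) simp_all
  then show ?thesis using that y fy by simp
qed

end

context two_separation
begin

abbreviation colouring_P :: "('a \<Rightarrow> nat) \<Rightarrow> bool" where
  "colouring_P \<equiv> colouring m P (induced E P)"

abbreviation realises_P :: "'a \<Rightarrow> bool \<times> bool \<times> bool \<Rightarrow> bool" where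
  "realises_P x t \<equiv> realises m P (induced E P) x a b t"

abbreviation realises_Q :: "'a \<Rightarrow> bool \<times> bool \<times> bool \<Rightarrow> bool" where
  "realises_Q y t \<equiv> realises m Q (induced E Q) y a b t"

lemma realises_Q_distinct:
  assumes "y \<in> Q - {a, b}"
  shows "realises_Q y rainbow \<or> (\<forall>p\<in>{a, b}. realises_Q y (p = a, p = b, False))"
  using flexible_realises_distinct[OF flexible_Q _ cut_in_sides(3,4)] assms cut_distinct by auto

lemma realises_Q_equal:
  assumes "y \<in> Q - {a, b}" "\<not> E a b"
  shows "realises_Q y apart \<or> realises_Q y monochrome"
  using flexible_realises_equal[OF flexible_Q _ cut_in_sides(3,4)] assms cut_distinct by auto

lemma realises_Q_cases:
  assumes "y \<in> Q - {a, b}"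
  obtains "E a b" "realises_Q y rainbow"
  | "\<not> E a b" "realises_Q y apart" "realises_Q y rainbow \<or> (\<forall>p\<in>{a, b}. realises_Q y (p = a, p = b, False))"
  | "\<not> E a b" "realises_Q y rainbow" "realises_Q y monochrome" "\<exists>p\<in>{a, b}. realises_Q y (p = a, p = b, False)"
proof (cases "E a b")
  case True
  then show ?thesis
    using that(1) flexible_realises_rainbow_if_edge[OF flexible_Q _ cut_in_sides(3,4)] assms cut_distinct
      cut_in_sides by auto
next
  case False
  then show ?thesis
    using that(2,3) realises_Q_distinct[OF assms]
      flexible_realises_patterns[OF flexible_Q _ cut_in_sides(3,4)] assms cut_distinct
    by auto
qed

lemma joining_pattern:
  assumes "p \<in> {a, b}" "c a \<noteq> c b"
  shows "(c p = c a, c p = c b, c a = c b) = (p = a, p = b, False)"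
  using assms by auto

lemma same_colour_across:
  assumes x: "x \<in> P - {a, b}" and y: "y \<in> Q - {a, b}"
  shows "\<exists>c. colouring m V E c \<and> c x = c y"
proof -
  note P_patterns = flexible_realises_patterns[OF flexible_P _ cut_in_sides(1,2), of x]
  note Q_patterns = flexible_realises_patterns[OF flexible_Q _ cut_in_sides(3,4), of y]
  have "\<exists>t. realises_P x t \<and> realises_Q y t"
  proof (cases "E a b")
    case True
    then show ?thesis
      using flexible_realises_rainbow_if_edge[OF flexible_P _ cut_in_sides(1,2), of x]
        flexible_realises_rainbow_if_edge[OF flexible_Q _ cut_in_sides(3,4), of y]
        x y cut_distinct cut_in_sides by auto
  next
    case False
    \<comment> \<open>any two of the four alternatives in \<open>flexible_realises_patterns\<close> share a pattern\<close>
    show ?thesis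
      using P_patterns Q_patterns False x y cut_distinct cut_in_sides by simp blast
  qed
  then obtain t c1 where c1: "colouring_P c1" "(c1 x = c1 a, c1 x = c1 b, c1 a = c1 b) = t"
    and r: "realises_Q y t"
    unfolding realises_def by blast
  have "y \<in> Q" "c1 x \<in> {1..m}" using x y colouring_range[OF c1(1)] by auto
  then obtain c where "colouring m V E c" "\<forall>v\<in>P. c v = c1 v" "c y = c1 x"
    by (rule extend_colouring_at[OF c1(1)]) (use c1 r in simp)
  then show ?thesis using x by auto
qed

lemma spare_colour_P:
  assumes e: "e1 \<in> P" "e2 \<in> P"
  obtains c1 k where "colouring_P c1" "k \<in> {1..m}" "k \<notin> {c1 a, c1 b, c1 e1, c1 e2}"
proof -
  have "\<exists>c1. colouring_P c1 \<and> (5 \<le> m \<or> \<not> distinct [c1 a, c1 b, c1 e1, c1 e2])"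
  proof (cases "5 \<le> m \<or> \<not> distinct [a, b, e1, e2]")
    case True
    obtain c1 where "colouring_P c1"
      using flexible_on_distinct[OF flexible_P cut_in_sides(1,2) cut_distinct] by blast
    moreover have "\<not> distinct [c1 a, c1 b, c1 e1, c1 e2]" if "\<not> distinct [a, b, e1, e2]"
      using that distinct_map[of c1 "[a, b, e1, e2]"] by auto
    ultimately show ?thesis using True by blast
  next
    case False
    then have "m = 4" and four: "card {a, b, e1, e2} = 4" using m by auto
    then have "fragile 4 V E" using fragile by simp
    moreover have "{a, b, e1, e2} \<subseteq> V" using e cut_in_sides sides by auto
    ultimately obtain u w where uw: "u \<in> {a, b, e1, e2}" "w \<in> {a, b, e1, e2}" "u \<noteq> w" "\<not> E u w"
      using fragile_4_no_K4[OF graph _ _ four] by blast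
    then obtain c1 where c1: "colouring_P c1" "c1 u = c1 w"
      using flexible_on_same[OF flexible_P, of u w] e cut_in_sides by auto
    have "\<not> inj_on c1 {a, b, e1, e2}" using uw c1(2) unfolding inj_on_def by blast
    then have "\<not> distinct [c1 a, c1 b, c1 e1, c1 e2]" using distinct_map[of c1 "[a, b, e1, e2]"] by simp
    then show ?thesis using c1(1) by blast
  qed
  then obtain c1 where c1: "colouring_P c1" "5 \<le> m \<or> \<not> distinct [c1 a, c1 b, c1 e1, c1 e2]"
    by blast
  obtain k where "k \<in> {1..m}" "k \<notin> {c1 a, c1 b, c1 e1, c1 e2}"
    using unused_colour4[OF m c1(2)] by blast
  then show ?thesis by (rule that[OF c1(1)])
qed

lemma avoid_pair_across:
  assumes y: "y \<in> Q - {a, b}" and e: "e1 \<in> P" "e2 \<in> P" "e1 \<noteq> e2"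
  shows "\<exists>c. colouring m V E c \<and> c y \<notin> {c e1, c e2}"
proof -
  have extend: ?thesis
    if c1: "colouring_P c1" and k: "k \<in> {1..m}" "k \<notin> {c1 e1, c1 e2}"
      and r: "realises_Q y (k = c1 a, k = c1 b, c1 a = c1 b)" for c1 k
  proof -
    have "y \<in> Q" using y by simp
    obtain c where "colouring m V E c" "\<forall>v\<in>P. c v = c1 v" "c y = k"
      by (rule extend_colouring_at[OF c1 \<open>y \<in> Q\<close> k(1) r])
    then show ?thesis using e k(2) by (intro exI[of _ c]) auto
  qed
  from realises_Q_cases[OF y] show ?thesis
  proof cases
    case 1
    obtain c1 k where c1: "colouring_P c1" and k: "k \<in> {1..m}" "k \<notin> {c1 a, c1 b, c1 e1, c1 e2}"
      by (rule spare_colour_P[OF e(1,2)])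
    have "c1 a \<noteq> c1 b" using colouring_edge[OF c1, of a b] 1(1) cut_in_sides by simp
    then show ?thesis using extend[OF c1, of k] k 1(2) by simp
  next
    case 2
    obtain c1 where c1: "colouring_P c1" "c1 a = c1 b"
      using flexible_on_same[OF flexible_P cut_in_sides(1,2) cut_distinct] 2(1) by auto
    obtain k where k: "k \<in> {1..m}" "k \<notin> {c1 a, c1 e1, c1 e2}" using unused_colour3[OF m] by blast
    show ?thesis using extend[OF c1(1), of k] c1(2) k 2(2) by simp
  next
    case 3
    show ?thesis
    proof (cases "e1 \<in> {a, b} \<or> e2 \<in> {a, b}")
      case True
      obtain c1 where c1: "colouring_P c1" "c1 a \<noteq> c1 b"
        using flexible_on_distinct[OF flexible_P cut_in_sides(1,2) cut_distinct] by blast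
      then have "\<not> distinct [c1 a, c1 b, c1 e1, c1 e2]" using True by auto
      then obtain k where k: "k \<in> {1..m}" "k \<notin> {c1 a, c1 b, c1 e1, c1 e2}"
        using unused_colour4[OF m] by blast
      show ?thesis using extend[OF c1(1), of k] c1(2) k 3(2) by simp
    next
      case False
      obtain p where p: "p \<in> {a, b}" "realises_Q y (p = a, p = b, False)" using 3(4) by blast
      obtain c1 where c1: "colouring_P c1" "c1 p \<notin> {c1 e1, c1 e2}"
        using flexible_on_avoid[OF flexible_P _ e(1,2) _ _ e(3)] p(1) False cut_in_sides by blast
      have "realises_Q y (c1 p = c1 a, c1 p = c1 b, c1 a = c1 b)"
        using joining_pattern[OF p(1), of c1] p 3(3) by (cases "c1 a = c1 b") auto
      then show ?thesis using extend[OF c1(1)] c1(2) colouring_range[OF c1(1)] p(1) cut_in_sides by auto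
    qed
  qed
qed

lemma avoid_pair_with_cross_vertex:
  assumes u: "u \<in> P - {a, b}" and e: "e \<in> P" "e \<noteq> u" and y: "y \<in> Q - {a, b}"
  shows "\<exists>c. colouring m V E c \<and> c u \<notin> {c y, c e}"
proof -
  obtain s where s: "s \<in> {a, b}" "s \<noteq> e" using cut_distinct by blast
  obtain c1 where c1: "colouring_P c1" "c1 u \<notin> {c1 e, c1 s}"
    using flexible_on_avoid[OF flexible_P, of u e s] u e s cut_in_sides by auto
  have extend: ?thesis
    if k: "k \<in> {1..m}" "k \<noteq> c1 u" and r: "realises_Q y (k = c1 a, k = c1 b, c1 a = c1 b)" for k
  proof -
    have "y \<in> Q" using y by simp
    obtain c where "colouring m V E c" "\<forall>v\<in>P. c v = c1 v" "c y = k"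
      by (rule extend_colouring_at[OF c1(1) \<open>y \<in> Q\<close> k(1) r])
    then show ?thesis using u e c1(2) k(2) by (intro exI[of _ c]) auto
  qed
  show ?thesis
  proof (cases "c1 a = c1 b")
    case True
    then have "\<not> E a b" using colouring_edge[OF c1(1), of a b] cut_in_sides by auto
    have "c1 u \<noteq> c1 a" using True s c1(2) by auto
    obtain k where k: "k \<in> {1..m}" "k \<notin> {c1 a, c1 u, c1 u}" using unused_colour3[OF m] by blast
    show ?thesis
      using realises_Q_equal[OF y \<open>\<not> E a b\<close>] extend[of k] extend[of "c1 a"] k True \<open>c1 u \<noteq> c1 a\<close>
        colouring_range[OF c1(1)] cut_in_sides by auto
  next
    case False
    obtain k where k: "k \<in> {1..m}" "k \<notin> {c1 a, c1 b, c1 u}" using unused_colour3[OF m] by blast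
    have "realises_Q y (c1 s = c1 a, c1 s = c1 b, c1 a = c1 b)" if "\<forall>p\<in>{a, b}. realises_Q y (p = a, p = b, False)"
      unfolding joining_pattern[OF s(1) False] using that s(1) by blast
    then show ?thesis
      using realises_Q_distinct[OF y] extend[of k] extend[of "c1 s"] k False c1(2)
        colouring_range[OF c1(1)] s(1) cut_in_sides by auto
  qed
qed

lemma cut_vertex_avoid_pair_across:
  assumes p: "p \<in> {a, b}" and u: "u \<in> P - {a, b}" and y: "y \<in> Q - {a, b}"
  shows "\<exists>c. colouring m V E c \<and> c p \<notin> {c y, c u}"
proof -
  obtain q where q: "q \<in> {a, b}" "q \<noteq> p" using cut_distinct by blast
  obtain c1 where c1: "colouring_P c1" "c1 p \<notin> {c1 u, c1 q}"
    using flexible_on_avoid[OF flexible_P, of p u q] p u q cut_in_sides by auto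
  have ab: "c1 a \<noteq> c1 b" using p q c1(2) by auto
  have extend: ?thesis
    if k: "k \<in> {1..m}" "k \<noteq> c1 p" and r: "realises_Q y (k = c1 a, k = c1 b, c1 a = c1 b)" for k
  proof -
    have "y \<in> Q" using y by simp
    obtain c where "colouring m V E c" "\<forall>v\<in>P. c v = c1 v" "c y = k"
      by (rule extend_colouring_at[OF c1(1) \<open>y \<in> Q\<close> k(1) r])
    then show ?thesis using u p c1(2) k(2) cut_in_sides by (intro exI[of _ c]) auto
  qed
  obtain k where k: "k \<in> {1..m}" "k \<notin> {c1 a, c1 b, c1 p}" using unused_colour3[OF m] by blast
  have "realises_Q y (c1 q = c1 a, c1 q = c1 b, c1 a = c1 b)" if "\<forall>p\<in>{a, b}. realises_Q y (p = a, p = b, False)"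
    unfolding joining_pattern[OF q(1) ab] using that q(1) by blast
  then show ?thesis
    using realises_Q_distinct[OF y] extend[of k] extend[of "c1 q"] k ab c1(2)
      colouring_range[OF c1(1)] q(1) cut_in_sides by auto
qed

lemma two_colours_via_extension:
  assumes c1: "colouring_P c1" and k: "k \<in> {1..m}"
    and r: "realises_Q y (k = c1 a, k = c1 b, c1 a = c1 b)" and two: "card {k, c1 u, c1 v} = 2"
    and in_P: "u \<in> P" "v \<in> P" and y: "y \<in> Q"
  shows "\<exists>c. colouring m V E c \<and> card {c y, c u, c v} = 2"
proof -
  obtain c where "colouring m V E c" "\<forall>v\<in>P. c v = c1 v" "c y = k"
    by (rule extend_colouring_at[OF c1 y k r])
  then show ?thesis using in_P two by (intro exI[of _ c]) auto
qed

lemma two_colours_adjacent_across: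
  assumes u: "u \<in> P - {a, b}" and v: "v \<in> P" "E u v" and y: "y \<in> Q - {a, b}"
  shows "\<exists>c. colouring m V E c \<and> card {c y, c u, c v} = 2"
proof -
  have "y \<in> Q" "u \<in> P" using u y by auto
  note extend = two_colours_via_extension[OF _ _ _ _ \<open>u \<in> P\<close> v(1) \<open>y \<in> Q\<close>]
  have uv: "c1 u \<noteq> c1 v" if "colouring_P c1" for c1
    using colouring_edge[OF that, of u v] u v by simp
  have pick: "card {c1 w, c1 u, c1 v} = 2" if "colouring_P c1" "w \<in> {u, v}" for c1 w
    using uv[OF that(1)] that(2) by (auto simp: card_insert_if)
  from realises_Q_cases[OF y] show ?thesis
  proof cases
    case 1
    obtain c1 where c1: "colouring_P c1" "c1 u \<notin> {c1 a, c1 b}"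
      using flexible_on_avoid[OF flexible_P _ cut_in_sides(1,2)] u cut_distinct by blast
    have "c1 a \<noteq> c1 b" using colouring_edge[OF c1(1), of a b] 1(1) cut_in_sides by simp
    then have "realises_Q y (c1 u = c1 a, c1 u = c1 b, c1 a = c1 b)" using c1(2) 1(2) by simp
    then show ?thesis
      using extend[OF c1(1) colouring_range[OF c1(1) \<open>u \<in> P\<close>]] pick[OF c1(1), of u] by simp
  next
    case 2
    obtain c1 where c1: "colouring_P c1" "c1 a = c1 b"
      using flexible_on_same[OF flexible_P cut_in_sides(1,2) cut_distinct] 2(1) by auto
    have "c1 u \<noteq> c1 a \<or> c1 v \<noteq> c1 a" using uv[OF c1(1)] by auto
    then obtain w where w: "w \<in> {u, v}" "c1 w \<noteq> c1 a" by blast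
    then have "w \<in> P" "realises_Q y (c1 w = c1 a, c1 w = c1 b, c1 a = c1 b)"
      using c1(2) 2(2) u v by auto
    then show ?thesis
      using extend[OF c1(1) colouring_range[OF c1(1) \<open>w \<in> P\<close>]] pick[OF c1(1) w(1)] by simp
  next
    case 3
    obtain p where p: "p \<in> {a, b}" "realises_Q y (p = a, p = b, False)" using 3(4) by blast
    obtain c1 where c1: "colouring_P c1" "c1 a \<noteq> c1 b"
      using flexible_on_distinct[OF flexible_P cut_in_sides(1,2) cut_distinct] by blast
    have "c1 u \<notin> {c1 a, c1 b} \<or> c1 v \<notin> {c1 a, c1 b} \<or> c1 p \<in> {c1 u, c1 v}"
      using p(1) uv[OF c1(1)] c1(2) by auto
    then consider w where "w \<in> {u, v}" "c1 w \<notin> {c1 a, c1 b}" | "c1 p \<in> {c1 u, c1 v}"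
      by blast
    then show ?thesis
    proof cases
      case (1 w)
      then have "w \<in> P" "realises_Q y (c1 w = c1 a, c1 w = c1 b, c1 a = c1 b)"
        using c1(2) 3(2) u v by auto
      then show ?thesis
        using extend[OF c1(1) colouring_range[OF c1(1) \<open>w \<in> P\<close>]] pick[OF c1(1) 1(1)] by simp
    next
      case 2
      have "realises_Q y (c1 p = c1 a, c1 p = c1 b, c1 a = c1 b)"
        unfolding joining_pattern[OF p(1) c1(2)] by (rule p(2))
      moreover have "card {c1 p, c1 u, c1 v} = 2" using 2 pick[OF c1(1), of u] pick[OF c1(1), of v] by auto
      ultimately show ?thesis
        using extend[OF c1(1) colouring_range[OF c1(1)]] p(1) cut_in_sides by blast
    qed
  qed
qed

lemma nonadjacent_pair_meets_cut_vertex: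
  assumes "\<not> E a b" and p: "p \<in> {a, b}" and u: "u \<in> P - {a, b}" and v: "v \<in> P" "v \<noteq> u" "\<not> E u v"
  shows "\<exists>c1. colouring_P c1 \<and> (c1 a = c1 b \<longrightarrow> card {c1 p, c1 u, c1 v} = 2)
    \<and> (c1 u \<noteq> c1 v \<longrightarrow> c1 p \<in> {c1 u, c1 v})"
proof (cases "v = p")
  case True
  obtain q where q: "q \<in> {a, b}" "q \<noteq> p" using cut_distinct by blast
  have "\<not> (induced E P u p \<and> induced E P u q \<and> induced E P p q)"
    using \<open>\<not> E a b\<close> p q graph_sym[OF graph] by auto
  then obtain c1 where c1: "colouring_P c1" "card {c1 u, c1 p, c1 q} = 2"
    using flexible_on_two_colours[OF flexible_P, of u p q] u p q cut_in_sides by auto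
  have "card {c1 p, c1 u, c1 v} = 2" if "c1 a = c1 b"
    using that c1(2) p q True by (auto simp: card_insert_if)
  then show ?thesis using c1(1) True by blast
next
  case False
  have "\<not> (induced E P u v \<and> induced E P u p \<and> induced E P v p)" using v by auto
  then obtain c1 where c1: "colouring_P c1" "card {c1 u, c1 v, c1 p} = 2"
    using flexible_on_two_colours[OF flexible_P, of u v p] u v p False cut_in_sides by auto
  then have "card {c1 p, c1 u, c1 v} = 2" "c1 u \<noteq> c1 v \<longrightarrow> c1 p \<in> {c1 u, c1 v}"
    by (auto simp: insert_commute card_insert3_eq_2_iff)
  then show ?thesis using c1(1) by blast
qed

lemma two_colours_nonadjacent_across_joining:
  assumes "\<not> E a b" and p: "p \<in> {a, b}" and join: "realises_Q y (p = a, p = b, False)"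
    and mono: "realises_Q y monochrome" and rainbow: "realises_Q y rainbow"
    and u: "u \<in> P - {a, b}" and v: "v \<in> P" "v \<noteq> u" "\<not> E u v" and y: "y \<in> Q"
  shows "\<exists>c. colouring m V E c \<and> card {c y, c u, c v} = 2"
proof -
  have "u \<in> P" using u by simp
  note extend = two_colours_via_extension[OF _ _ _ _ \<open>u \<in> P\<close> v(1) y]
  obtain c1 where c1: "colouring_P c1" and equal: "c1 a = c1 b \<longrightarrow> card {c1 p, c1 u, c1 v} = 2"
    and meets: "c1 u \<noteq> c1 v \<longrightarrow> c1 p \<in> {c1 u, c1 v}"
    using nonadjacent_pair_meets_cut_vertex[OF \<open>\<not> E a b\<close> p u v] by blast
  have kp: "c1 p \<in> {1..m}" using colouring_range[OF c1] p cut_in_sides by auto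
  consider "c1 a = c1 b" | "c1 a \<noteq> c1 b" "c1 u = c1 v" | "c1 a \<noteq> c1 b" "c1 u \<noteq> c1 v" by blast
  then show ?thesis
  proof cases
    case 1
    then have "realises_Q y (c1 p = c1 a, c1 p = c1 b, c1 a = c1 b)" using p mono by auto
    then show ?thesis using extend[OF c1 kp] equal 1 by blast
  next
    case 2
    obtain k where k: "k \<in> {1..m}" "k \<notin> {c1 a, c1 b, c1 u}" using unused_colour3[OF m] by blast
    then have "card {k, c1 u, c1 v} = 2" using 2(2) by (simp add: card_insert_if)
    then show ?thesis using extend[OF c1 k(1)] k(2) rainbow 2(1) by simp
  next
    case 3
    have "realises_Q y (c1 p = c1 a, c1 p = c1 b, c1 a = c1 b)"
      unfolding joining_pattern[OF p 3(1)] by (rule join)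
    moreover have "card {c1 p, c1 u, c1 v} = 2"
      using meets 3(2) by (auto simp: card_insert_if)
    ultimately show ?thesis using extend[OF c1 kp] by blast
  qed
qed

lemma two_colours_nonadjacent_across:
  assumes u: "u \<in> P - {a, b}" and v: "v \<in> P" "v \<noteq> u" "\<not> E u v" and y: "y \<in> Q - {a, b}"
  shows "\<exists>c. colouring m V E c \<and> card {c y, c u, c v} = 2"
proof -
  have "y \<in> Q" "u \<in> P" using u y by auto
  note extend = two_colours_via_extension[OF _ _ _ _ \<open>u \<in> P\<close> v(1) \<open>y \<in> Q\<close>]
  obtain c1 where c1: "colouring_P c1" "c1 u = c1 v"
    using flexible_on_same[OF flexible_P \<open>u \<in> P\<close> v(1)] v by auto
  have pick: "card {k, c1 u, c1 v} = 2" if "k \<noteq> c1 u" for k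
    using that c1(2) by (simp add: card_insert_if)
  show ?thesis
  proof (cases "c1 a = c1 b")
    case False
    from realises_Q_distinct[OF y] show ?thesis
    proof
      assume "realises_Q y rainbow"
      moreover obtain k where k: "k \<in> {1..m}" "k \<notin> {c1 a, c1 b, c1 u}" using unused_colour3[OF m] by blast
      ultimately show ?thesis using extend[OF c1(1) k(1)] pick False by simp
    next
      assume join: "\<forall>p\<in>{a, b}. realises_Q y (p = a, p = b, False)"
      have "c1 a \<noteq> c1 u \<or> c1 b \<noteq> c1 u" using False by auto
      then obtain p where p: "p \<in> {a, b}" "c1 p \<noteq> c1 u" by blast
      have "realises_Q y (c1 p = c1 a, c1 p = c1 b, c1 a = c1 b)"
        unfolding joining_pattern[OF p(1) False] using join p(1) by blast
      then show ?thesis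
        using extend[OF c1(1) colouring_range[OF c1(1)]] pick[OF p(2)] p(1) cut_in_sides by blast
    qed
  next
    case True
    then have "\<not> E a b" using colouring_edge[OF c1(1), of a b] cut_in_sides by auto
    show ?thesis
    proof (cases "realises_Q y apart")
      case True
      obtain k where k: "k \<in> {1..m}" "k \<notin> {c1 a, c1 u, c1 u}" using unused_colour3[OF m] by blast
      then show ?thesis using extend[OF c1(1) k(1)] pick True \<open>c1 a = c1 b\<close> by simp
    next
      case False
      from realises_Q_cases[OF y] obtain p where "p \<in> {a, b}" "realises_Q y (p = a, p = b, False)"
        "realises_Q y monochrome" "realises_Q y rainbow"
      proof cases
        case 3
        then show ?thesis using that by blast
      qed (use False \<open>\<not> E a b\<close> in simp_all)
      then show ?thesis
        using two_colours_nonadjacent_across_joining[OF \<open>\<not> E a b\<close> _ _ _ _ u v \<open>y \<in> Q\<close>] by blast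
    qed
  qed
qed

lemma two_colours_across:
  assumes "u \<in> P - {a, b}" "v \<in> P" "v \<noteq> u" "y \<in> Q - {a, b}"
  shows "\<exists>c. colouring m V E c \<and> card {c y, c u, c v} = 2"
  using two_colours_adjacent_across two_colours_nonadjacent_across assms by (cases "E u v") auto

lemma lift_from_P:
  assumes "\<exists>c1. colouring_P c1 \<and> \<Phi> c1" and "\<And>c c1. \<forall>v\<in>P. c v = c1 v \<Longrightarrow> \<Phi> c1 \<Longrightarrow> \<Phi> c"
  shows "\<exists>c. colouring m V E c \<and> \<Phi> c"
proof -
  obtain c1 where c1: "colouring_P c1" "\<Phi> c1" using assms(1) by blast
  obtain c where "colouring m V E c" "\<forall>v\<in>P. c v = c1 v" by (rule extend_colouring[OF c1(1)])
  then show ?thesis using assms(2) c1(2) by blast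
qed

lemma flexible_on_P: "flexible_on m V E P"
proof (rule flexible_onI)
  fix x y assume "x \<in> P" "y \<in> P" "x \<noteq> y" "\<not> E x y"
  then show "\<exists>c. colouring m V E c \<and> c x = c y"
    by (intro lift_from_P flexible_on_same[OF flexible_P]) auto
next
  fix x y assume "x \<in> P" "y \<in> P" "x \<noteq> y"
  then show "\<exists>c. colouring m V E c \<and> c x \<noteq> c y"
    by (intro lift_from_P flexible_on_distinct[OF flexible_P]) auto
next
  fix x y z assume "x \<in> P" "y \<in> P" "z \<in> P" "x \<noteq> y" "x \<noteq> z" "y \<noteq> z"
  then show "\<exists>c. colouring m V E c \<and> c x \<notin> {c y, c z}"
    by (intro lift_from_P flexible_on_avoid[OF flexible_P]) auto
next
  fix x y z assume "x \<in> P" "y \<in> P" "z \<in> P" "x \<noteq> y" "x \<noteq> z" "y \<noteq> z"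
    and "\<not> (E x y \<and> E x z \<and> E y z)"
  then show "\<exists>c. colouring m V E c \<and> card {c x, c y, c z} = 2"
    by (intro lift_from_P flexible_on_two_colours[OF flexible_P]) auto
qed

lemma flexible_on_Q: "flexible_on m V E Q"
  by (rule two_separation.flexible_on_P[OF swap_sides])

lemma outside_Q: "v \<in> V \<Longrightarrow> v \<notin> Q \<Longrightarrow> v \<in> P - {a, b}"
  using sides cut by auto

lemma same_colour_glued:
  assumes "x \<in> V" "y \<in> V" "x \<noteq> y" "\<not> E x y"
  shows "\<exists>c. colouring m V E c \<and> c x = c y"
proof -
  consider "x \<in> P" "y \<in> P" | "x \<in> Q" "y \<in> Q" | "x \<in> P - {a, b}" "y \<in> Q - {a, b}"
    | "x \<in> Q - {a, b}" "y \<in> P - {a, b}"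
    using outside_P outside_Q assms(1,2) by blast
  then show ?thesis
  proof cases
    case 1
    then show ?thesis using flexible_on_same[OF flexible_on_P] assms by blast
  next
    case 2
    then show ?thesis using flexible_on_same[OF flexible_on_Q] assms by blast
  next
    case 3
    then show ?thesis by (rule same_colour_across)
  next
    case 4
    then show ?thesis using two_separation.same_colour_across[OF swap_sides] by (metis (no_types))
  qed
qed

lemma avoid_glued_from_Q_side:
  assumes x: "x \<in> Q - {a, b}" and "y \<in> V" "z \<in> V" "x \<noteq> y" "x \<noteq> z" "y \<noteq> z"
  shows "\<exists>c. colouring m V E c \<and> c x \<notin> {c y, c z}"
proof -
  note cross = two_separation.avoid_pair_with_cross_vertex[OF swap_sides x]
  consider "y \<in> Q" "z \<in> Q" | "y \<in> Q" "z \<in> P - {a, b}" | "y \<in> P - {a, b}" "z \<in> Q"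
    | "y \<in> P" "z \<in> P"
    using outside_P outside_Q assms(2,3) by blast
  then show ?thesis
  proof cases
    case 1
    then show ?thesis using flexible_on_avoid[OF flexible_on_Q] x assms by blast
  next
    case 2
    then show ?thesis using cross[of y z] assms by auto
  next
    case 3
    then show ?thesis using cross[of z y] assms by (auto simp: insert_commute)
  next
    case 4
    then show ?thesis using avoid_pair_across[OF x] assms by blast
  qed
qed

lemma avoid_glued_from_cut:
  assumes x: "x \<in> {a, b}" and "y \<in> V" "z \<in> V" "x \<noteq> y" "x \<noteq> z" "y \<noteq> z"
  shows "\<exists>c. colouring m V E c \<and> c x \<notin> {c y, c z}"
proof -
  have "x \<in> P" "x \<in> Q" using x cut_in_sides by auto
  consider "y \<in> P" "z \<in> P" | "y \<in> Q" "z \<in> Q" | "y \<in> P - {a, b}" "z \<in> Q - {a, b}"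
    | "y \<in> Q - {a, b}" "z \<in> P - {a, b}"
    using outside_P outside_Q assms(2,3) by blast
  then show ?thesis
  proof cases
    case 1
    then show ?thesis using flexible_on_avoid[OF flexible_on_P] \<open>x \<in> P\<close> assms by blast
  next
    case 2
    then show ?thesis using flexible_on_avoid[OF flexible_on_Q] \<open>x \<in> Q\<close> assms by blast
  next
    case 3
    then show ?thesis using cut_vertex_avoid_pair_across[OF x, of y z] by (auto simp: insert_commute)
  next
    case 4
    then show ?thesis using cut_vertex_avoid_pair_across[OF x, of z y] by blast
  qed
qed

lemma avoid_glued:
  assumes "x \<in> V" "y \<in> V" "z \<in> V" "x \<noteq> y" "x \<noteq> z" "y \<noteq> z"
  shows "\<exists>c. colouring m V E c \<and> c x \<notin> {c y, c z}"
proof -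
  consider "x \<in> Q - {a, b}" | "x \<in> P - {a, b}" | "x \<in> {a, b}"
    using outside_P assms(1) by blast
  then show ?thesis
  proof cases
    case 1
    then show ?thesis using avoid_glued_from_Q_side assms by blast
  next
    case 2
    then show ?thesis
      using two_separation.avoid_glued_from_Q_side[OF swap_sides] assms by (metis (no_types))
  next
    case 3
    then show ?thesis using avoid_glued_from_cut assms by blast
  qed
qed

lemma two_colours_glued:
  assumes T: "T = {x, y, z}" "T \<subseteq> V" "card T = 3" and not_P: "\<not> T \<subseteq> P" and not_Q: "\<not> T \<subseteq> Q"
  shows "\<exists>c. colouring m V E c \<and> card (c ` T) = 2"
proof -
  obtain w u where w: "w \<in> T" "w \<in> Q - {a, b}" and u: "u \<in> T" "u \<in> P - {a, b}"
    using not_P not_Q outside_P outside_Q T(2) by blast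
  have "w \<noteq> u" using w u cut by blast
  then have "card (T - {w, u}) = 1" using T w(1) u(1) by (simp add: card_Diff_subset)
  then obtain v where v: "T - {w, u} = {v}" by (auto simp: card_Suc_eq)
  then have T_eq: "T = {w, u, v}" "v \<in> V" "v \<noteq> u" "v \<noteq> w" using w(1) u(1) T(2) by auto
  have "\<exists>c. colouring m V E c \<and> card {c w, c u, c v} = 2"
  proof (cases "v \<in> P")
    case True
    then show ?thesis using two_colours_across[OF u(2) True T_eq(3) w(2)] by blast
  next
    case False
    then have "v \<in> Q - {a, b}" using outside_P T_eq(2) by blast
    then show ?thesis
      using two_separation.two_colours_across[OF swap_sides w(2) _ T_eq(4) u(2)] \<open>w \<noteq> u\<close>
      by (auto simp: insert_commute)
  qed
  then show ?thesis unfolding T_eq(1) by simp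
qed

lemma distinct_colours_glued:
  assumes "x \<in> V" "y \<in> V" "x \<noteq> y"
  shows "\<exists>c. colouring m V E c \<and> c x \<noteq> c y"
proof -
  consider "x \<in> P" "y \<in> P" | "x \<in> Q" "y \<in> Q" | "x \<in> P - {a, b}" "y \<in> Q - {a, b}"
    | "x \<in> Q - {a, b}" "y \<in> P - {a, b}"
    using outside_P outside_Q assms(1,2) by blast
  then show ?thesis
  proof cases
    case 1
    then show ?thesis using flexible_on_distinct[OF flexible_on_P] assms by blast
  next
    case 2
    then show ?thesis using flexible_on_distinct[OF flexible_on_Q] assms by blast
  next
    case 3
    then show ?thesis using avoid_pair_across[of y x a] cut_in_sides by auto
  next
    case 4
    then show ?thesis using avoid_glued_from_Q_side[of x y a] cut_in_sides sides assms(3) by auto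
  qed
qed

lemma flexible_glued: "flexible m V E"
proof (rule flexible_onI)
  show "\<exists>c. colouring m V E c \<and> c x = c y" if "x \<in> V" "y \<in> V" "x \<noteq> y" "\<not> E x y" for x y
    using same_colour_glued that .
  show "\<exists>c. colouring m V E c \<and> c x \<noteq> c y" if "x \<in> V" "y \<in> V" "x \<noteq> y" for x y
    using distinct_colours_glued that .
  show "\<exists>c. colouring m V E c \<and> c x \<notin> {c y, c z}"
    if "x \<in> V" "y \<in> V" "z \<in> V" "x \<noteq> y" "x \<noteq> z" "y \<noteq> z" for x y z
    using avoid_glued that .
next
  fix x y z assume xyz: "x \<in> V" "y \<in> V" "z \<in> V" "x \<noteq> y" "x \<noteq> z" "y \<noteq> z"
    and not_triangle: "\<not> (E x y \<and> E x z \<and> E y z)"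
  consider "{x, y, z} \<subseteq> P" | "{x, y, z} \<subseteq> Q" | "\<not> {x, y, z} \<subseteq> P" "\<not> {x, y, z} \<subseteq> Q" by blast
  then show "\<exists>c. colouring m V E c \<and> card {c x, c y, c z} = 2"
  proof cases
    case 1
    then show ?thesis using flexible_on_two_colours[OF flexible_on_P] xyz not_triangle by auto
  next
    case 2
    then show ?thesis using flexible_on_two_colours[OF flexible_on_Q] xyz not_triangle by auto
  next
    case 3
    then show ?thesis using two_colours_glued[of "{x, y, z}"] xyz by auto
  qed
qed

end

section \<open>Induction on the number of vertices\<close>

lemma separation_side_card_less:
  assumes "finite V" "separation V E S A B"
  shows "card (A \<union> S) < card V"
proof (rule psubset_card_mono[OF assms(1)])
  show "A \<union> S \<subset> V" using assms(2) unfolding separation_def by blast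
qed

lemma two_separation_of_separation:
  assumes "4 \<le> m" "graph V E" "fragile m V E" "separation V E {a, b} A B" "a \<noteq> b"
    and "flexible m (A \<union> {a, b}) (induced E (A \<union> {a, b}))"
      "flexible m (B \<union> {a, b}) (induced E (B \<union> {a, b}))"
  shows "two_separation m V E (A \<union> {a, b}) (B \<union> {a, b}) a b"
  using assms unfolding two_separation_def separation_def by blast

lemma fragile_imp_flexible:
  assumes "4 \<le> m" "graph V E" "fragile m V E"
  shows "flexible m V E"
  using assms
proof (induction "card V" arbitrary: V E rule: less_induct)
  case less
  consider "card V \<le> 3" | "k_connected 3 V E" | "4 \<le> card V" "\<not> k_connected 3 V E" by linarith
  then show ?case
  proof cases
    case 1
    then show ?thesis using less.prems by (intro flexible_if_card_le_3) auto
  next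
    case 2
    have "subgraph V E V E" using less.prems(2) unfolding subgraph_def by simp
    then have "colourable (m - 1) V E" using less.prems(3) 2 unfolding fragile_def by blast
    then show ?thesis using less.prems by (intro flexible_if_colourable) auto
  next
    case 3
    obtain S A B where sep: "separation V E S A B" and "card S = 2"
      using two_separation_exists[OF less.prems(2) 3] by blast
    then obtain a b where S: "S = {a, b}" "a \<noteq> b" by (auto simp: card_2_iff)
    have side_flexible: "flexible m (X \<union> S) (induced E (X \<union> S))"
      if "separation V E S X Y" for X Y
    proof (rule less.hyps)
      show "card (X \<union> S) < card V" using separation_side_card_less[OF graph_finite that] less.prems(2) .
      have "X \<union> S \<subseteq> V" using that unfolding separation_def by blast
      then show "graph (X \<union> S) (induced E (X \<union> S))" "fragile m (X \<union> S) (induced E (X \<union> S))"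
        using graph_induced fragile_induced less.prems by blast+
    qed (use less.prems in simp)
    have "two_separation m V E (A \<union> {a, b}) (B \<union> {a, b}) a b"
      using two_separation_of_separation[OF less.prems sep[unfolded S] S(2)]
        side_flexible[OF sep] side_flexible[OF separation_sym[OF sep]] S(1) by simp
    then show ?thesis by (rule two_separation.flexible_glued)
  qed
qed

theorem theorem3:
  fixes m :: nat and V :: "'a set" and E :: "'a \<Rightarrow> 'a \<Rightarrow> bool"
  assumes "m \<ge> 4" and "graph V E" and "fragile m V E"
  shows "(\<forall>x\<in>V. \<forall>y\<in>V. x \<noteq> y \<and> \<not> E x y \<longrightarrow> (\<exists>c. colouring m V E c \<and> c x = c y))
    \<and> (\<forall>x\<in>V. \<forall>y\<in>V. x \<noteq> y \<longrightarrow> (\<exists>c. colouring m V E c \<and> c x \<noteq> c y))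
    \<and> (\<forall>x\<in>V. \<forall>y\<in>V. \<forall>z\<in>V. x \<noteq> y \<and> x \<noteq> z \<and> y \<noteq> z \<longrightarrow>
         (\<exists>c. colouring m V E c \<and> c x \<notin> {c y, c z}))
    \<and> (\<forall>x\<in>V. \<forall>y\<in>V. \<forall>z\<in>V. x \<noteq> y \<and> x \<noteq> z \<and> y \<noteq> z \<and> \<not> (E x y \<and> E x z \<and> E y z) \<longrightarrow>
         (\<exists>c. colouring m V E c \<and> card {c x, c y, c z} = 2))"
  using fragile_imp_flexible[OF assms] unfolding flexible_on_def .

end
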